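(* Let $(Z, S(1), S(0), Y(1), Y(0), \mathbf{X})$ be random variables with $Z\in\{0,1\}$, $S(z)\in\{0,1\}$, $Y(z)$ real-valued, $\mathbf{X}$ a covariate vector, observed $S=S(Z)$, $Y=Y(Z)$, and assume Randomization: $Z \perp\!\!\!\perp \{S(1),S(0),Y(1),Y(0),\mathbf{X}\}$. Assume Strong Monotonicity, i.e. $S(0)=0$ almost surely. Suppose there is a constant $\varepsilon$ (not depending on $\mathbf{X}$) such that $$\varepsilon = \frac{E\{Y(0)\mid U=s\bar{s},\mathbf{X}\}}{E\{Y(0)\mid U=\bar{s}\bar{s},\mathbf{X}\}}.$$ Then $$ACE_{s\bar{s}} = E(Y\mid Z=1,S=1) - E\{w^{\varepsilon}_{s\bar{s}}(\mathbf{X})Y\mid Z=0\},\qquad ACE_{\bar{s}\bar{s}} = E(Y\mid Z=1,S=0) - E\{w^{\varepsilon}_{\bar{s}\bar{s}}(\mathbf{X})Y\mid Z=0\},$$ where $w^{\varepsilon}_{s\bar{s}}(\mathbf{X}) = \frac{\varepsilon e_{s\bar{s}}(\mathbf{X})}{\{\varepsilon e_{s\bar{s}}(\mathbf{X}) + e_{\bar{s}\bar{s}}(\mathbf{X})\}\pi_{s\bar{s}}}$ and $w^{\varepsilon}_{\bar{s}\bar{s}}(\mathbf{X}) = \frac{e_{\bar{s}\bar{s}}(\mathbf{X})}{\{\varepsilon e_{s\bar{s}}(\mathbf{X}) + e_{\bar{s}\bar{s}}(\mathbf{X})\}\pi_{\bar{s}\bar{s}}}$.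
   Context: The principal stratum is $U=(S(1),S(0))$, whose values $(1,1),(1,0),(0,1),(0,0)$ are labelled $ss, s\bar{s}, \bar{s}s, \bar{s}\bar{s}$. Principal scores: $e_u(\mathbf{X}) = \Pr(U=u\mid \mathbf{X})$; proportions $\pi_u=\Pr(U=u)$. Principal causal effects: $ACE_u = E\{Y(1)-Y(0)\mid U=u\}$. All expectations are assumed to exist and all conditioning events and denominators to be positive. *)

theory Defs
  imports "HOL-Probability.Probability"
begin

text \<open>Principal strata are encoded as pairs (S(1), S(0)) of booleans:
  (True,True) = ss, (True,False) = s-sbar, (False,True) = sbar-s, (False,False) = sbar-sbar.\<close>

definition stratum :: "('a \<Rightarrow> bool) \<Rightarrow> ('a \<Rightarrow> bool) \<Rightarrow> 'a \<Rightarrow> bool \<times> bool" where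
  "stratum S1 S0 = (\<lambda>\<omega>. (S1 \<omega>, S0 \<omega>))"

definition obs :: "('a \<Rightarrow> bool) \<Rightarrow> ('a \<Rightarrow> 'b) \<Rightarrow> ('a \<Rightarrow> 'b) \<Rightarrow> 'a \<Rightarrow> 'b" where
  "obs Z V1 V0 = (\<lambda>\<omega>. if Z \<omega> then V1 \<omega> else V0 \<omega>)"

definition cond_mean_ev :: "'a measure \<Rightarrow> ('a \<Rightarrow> real) \<Rightarrow> 'a set \<Rightarrow> real" where
  "cond_mean_ev M f B = (\<integral>\<omega>. indicator B \<omega> * f \<omega> \<partial>M) / measure M B"

definition sigX :: "'a measure \<Rightarrow> ('a \<Rightarrow> 'b) \<Rightarrow> 'b measure \<Rightarrow> 'a measure" where
  "sigX M X N = vimage_algebra (space M) X N"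

text \<open>Principal score e_u(X) = P(U = u | X), as a sigma(X)-measurable random variable.\<close>
definition pscore :: "'a measure \<Rightarrow> ('a \<Rightarrow> 'b) \<Rightarrow> 'b measure \<Rightarrow> ('a \<Rightarrow> bool \<times> bool) \<Rightarrow> bool \<times> bool \<Rightarrow> 'a \<Rightarrow> real" where
  "pscore M X N U u = real_cond_exp M (sigX M X N) (indicator {\<omega> \<in> space M. U \<omega> = u})"

definition pcond_mean :: "'a measure \<Rightarrow> ('a \<Rightarrow> 'b) \<Rightarrow> 'b measure \<Rightarrow> ('a \<Rightarrow> bool \<times> bool) \<Rightarrow> bool \<times> bool \<Rightarrow> ('a \<Rightarrow> real) \<Rightarrow> 'a \<Rightarrow> real" where
  "pcond_mean M X N U u f = (\<lambda>\<omega>.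
     real_cond_exp M (sigX M X N) (\<lambda>\<omega>'. indicator {\<omega>'' \<in> space M. U \<omega>'' = u} \<omega>' * f \<omega>') \<omega>
       / pscore M X N U u \<omega>)"

definition pprop :: "'a measure \<Rightarrow> ('a \<Rightarrow> bool \<times> bool) \<Rightarrow> bool \<times> bool \<Rightarrow> real" where
  "pprop M U u = measure M {\<omega> \<in> space M. U \<omega> = u}"

definition ACE :: "'a measure \<Rightarrow> ('a \<Rightarrow> bool \<times> bool) \<Rightarrow> bool \<times> bool \<Rightarrow> ('a \<Rightarrow> real) \<Rightarrow> ('a \<Rightarrow> real) \<Rightarrow> real" where
  "ACE M U u Y1 Y0 = cond_mean_ev M (\<lambda>\<omega>. Y1 \<omega> - Y0 \<omega>) {\<omega> \<in> space M. U \<omega> = u}"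

end

theory Submission
  imports Defs
begin

text \<open>Randomization makes conditioning on an arm Z = z leave the law of
  (S(1), S(0), Y(1), Y(0), X) unchanged. Hence E(Y | Z = 1, S = s) = E{Y(1) | S(1) = s}, which by
  strong monotonicity is the mean of Y(1) on the stratum (s, 0), and E{w(X) Y | Z = 0} = E{w(X) Y(0)}.
  Strong monotonicity also splits E{Y(0) | X} = c10(X) + c00(X) with c_u(X) = E{1{U = u} Y(0) | X},
  and the ratio assumption c10/e10 = \<epsilon> c00/e00 turns this into w_u(X) E{Y(0) | X} = c_u(X)/\<pi>_u.
  Integrating gives E{w_u(X) Y(0)} = E{Y(0) | U = u}.\<close>

lemma (in prob_space) indep_var_if_indep_set:
  assumes indep: "indep_set (sets A) (sets B)"
    and sub: "subalgebra M A" "subalgebra M B"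
    and f: "f \<in> measurable A MA" and g: "g \<in> measurable B MB"
  shows "indep_var MA f MB g"
proof -
  have "indep_sets (\<lambda>i. {case_bool f g i -` S \<inter> space M |S. S \<in> sets (case_bool MA MB i)}) UNIV"
    using indep unfolding indep_set_def
    by (rule indep_sets_mono_sets)
       (use f g sub in \<open>auto split: bool.split simp: measurable_def subalgebra_def\<close>)
  then show ?thesis
    unfolding indep_var_def indep_vars_def2
    using measurable_from_subalg[OF sub(1) f] measurable_from_subalg[OF sub(2) g]
    by (auto split: bool.split)
qed

lemma (in prob_space) integral_indicator_mult_indep_set:
  assumes indep: "indep_set (sets A) (sets B)" and sub: "subalgebra M A" "subalgebra M B"
    and E: "E \<in> sets A" and g: "g \<in> borel_measurable B" "integrable M g"
  shows "(\<integral>\<omega>. indicator E \<omega> * g \<omega> \<partial>M) = prob E * integral\<^sup>L M (g :: _ \<Rightarrow> real)"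
proof -
  have "E \<in> events" using E sub(1) by (auto simp: subalgebra_def)
  moreover have "indep_var borel (indicator E) borel g"
    by (rule indep_var_if_indep_set[OF indep sub borel_measurable_indicator[OF E] g(1)])
  ultimately show ?thesis
    using indep_var_lebesgue_integral[of "indicator E" g] g(2)
    by (simp add: emeasure_eq_measure)
qed

lemma (in prob_space) integrable_if_indicator_mult_indep_set:
  assumes indep: "indep_set (sets A) (sets B)" and sub: "subalgebra M A" "subalgebra M B"
    and E: "E \<in> sets A" "prob E \<noteq> 0" and g: "(g :: _ \<Rightarrow> real) \<in> borel_measurable B"
    and int: "integrable M (\<lambda>\<omega>. indicator E \<omega> * g \<omega>)"
  shows "integrable M g"
proof -
  have E_events: "E \<in> events" using E(1) sub(1) by (auto simp: subalgebra_def)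
  have "indep_var borel (\<lambda>\<omega>. ennreal (indicator E \<omega>)) borel (\<lambda>\<omega>. ennreal \<bar>g \<omega>\<bar>)"
    by (rule indep_var_if_indep_set[OF indep sub]) (use E(1) g in measurable)
  then have "indep_vars (\<lambda>_. borel)
      (case_bool (\<lambda>\<omega>. ennreal (indicator E \<omega>)) (\<lambda>\<omega>. ennreal \<bar>g \<omega>\<bar>)) UNIV"
    unfolding indep_var_def by (rule indep_vars_cong[THEN iffD1, rotated -1]) (auto split: bool.split)
  from indep_vars_nn_integral[OF _ this]
  have "(\<integral>\<^sup>+\<omega>. ennreal (norm (indicator E \<omega> * g \<omega>)) \<partial>M)
      = emeasure M E * (\<integral>\<^sup>+\<omega>. ennreal (norm (g \<omega>)) \<partial>M)"
    using E_events by (simp add: UNIV_bool abs_mult ennreal_mult' ennreal_indicator mult.commute)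
  moreover have "(\<integral>\<^sup>+\<omega>. ennreal (norm (indicator E \<omega> * g \<omega>)) \<partial>M) < \<infinity>"
    using int by (simp add: integrable_iff_bounded)
  moreover have "emeasure M E \<noteq> 0" using E(2) by (simp add: emeasure_eq_measure)
  ultimately have "(\<integral>\<^sup>+\<omega>. ennreal (norm (g \<omega>)) \<partial>M) < \<infinity>"
    by (auto simp: ennreal_mult_less_top top_unique)
  then show ?thesis
    using measurable_from_subalg[OF sub(2) g] by (intro integrableI_bounded) auto
qed

lemma cond_mean_ev_cong:
  assumes "\<And>\<omega>. \<omega> \<in> C \<Longrightarrow> f \<omega> = g \<omega>"
  shows "cond_mean_ev M f C = cond_mean_ev M g C"
proof -
  have "(\<lambda>\<omega>. indicator C \<omega> * f \<omega>) = (\<lambda>\<omega>. indicator C \<omega> * g \<omega>)"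
    using assms by (auto simp: indicator_def)
  then show ?thesis unfolding cond_mean_ev_def by simp
qed

lemma (in finite_measure) cond_mean_ev_AE_cong:
  assumes "C \<in> sets M" "D \<in> sets M" "AE \<omega> in M. \<omega> \<in> C \<longleftrightarrow> \<omega> \<in> D"
    and "f \<in> borel_measurable M"
  shows "cond_mean_ev M f C = cond_mean_ev M f D"
proof -
  have "(\<integral>\<omega>. indicator C \<omega> * f \<omega> \<partial>M) = (\<integral>\<omega>. indicator D \<omega> * f \<omega> \<partial>M)"
    by (rule integral_cong_AE) (use assms in \<open>auto simp: indicator_def\<close>)
  moreover have "measure M C = measure M D"
    using assms by (intro finite_measure_eq_AE) auto
  ultimately show ?thesis unfolding cond_mean_ev_def by simp
qed

lemma cond_mean_ev_diff:
  assumes "C \<in> sets M" "integrable M f" "integrable M g"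
  shows "cond_mean_ev M (\<lambda>\<omega>. f \<omega> - g \<omega>) C = cond_mean_ev M f C - cond_mean_ev M g C"
proof -
  have "integrable M (\<lambda>\<omega>. indicator C \<omega> * f \<omega>)" "integrable M (\<lambda>\<omega>. indicator C \<omega> * g \<omega>)"
    using integrable_mult_indicator[OF assms(1) assms(2)] integrable_mult_indicator[OF assms(1) assms(3)]
    by simp_all
  then show ?thesis
    unfolding cond_mean_ev_def by (simp add: right_diff_distrib diff_divide_distrib)
qed

lemma (in prob_space) cond_mean_ev_space: "cond_mean_ev M f (space M) = expectation f"
proof -
  have "(\<integral>\<omega>. indicator (space M) \<omega> * f \<omega> \<partial>M) = expectation f"
    by (rule Bochner_Integration.integral_cong) auto
  then show ?thesis unfolding cond_mean_ev_def by (simp add: prob_space)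
qed

lemma (in prob_space) cond_mean_ev_Int_indep_set:
  assumes indep: "indep_set (sets A) (sets B)" and sub: "subalgebra M A" "subalgebra M B"
    and E: "E \<in> sets A" "prob E \<noteq> 0" and C: "C \<in> sets B"
    and g: "g \<in> borel_measurable B" "integrable M g"
  shows "cond_mean_ev M g (E \<inter> C) = cond_mean_ev M g C"
proof -
  have events: "E \<in> events" "C \<in> events" using E(1) C sub by (auto simp: subalgebra_def)
  have "(\<integral>\<omega>. indicator (E \<inter> C) \<omega> * g \<omega> \<partial>M) = prob E * (\<integral>\<omega>. indicator C \<omega> * g \<omega> \<partial>M)"
    using integral_indicator_mult_indep_set[OF indep sub E(1), of "\<lambda>\<omega>. indicator C \<omega> * g \<omega>"]
      integrable_mult_indicator[OF events(2) g(2)] C g(1)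
    by (simp add: indicator_inter_arith mult.assoc)
  moreover have "prob (E \<inter> C) = (\<integral>\<omega>. indicator E \<omega> * indicator C \<omega> \<partial>M)"
    using events by (simp flip: indicator_inter_arith)
  then have "prob (E \<inter> C) = prob E * prob C"
    using integral_indicator_mult_indep_set[OF indep sub E(1), of "indicator C"] C events(2)
    by (simp add: emeasure_eq_measure)
  ultimately show ?thesis unfolding cond_mean_ev_def using E(2) by simp
qed

lemma (in sigma_finite_subalgebra) real_cond_exp_AE_partition:
  assumes "A \<in> sets M" "B \<in> sets M" "A \<inter> B = {}" "AE \<omega> in M. \<omega> \<in> A \<union> B"
    and f: "integrable M f"
  shows "AE \<omega> in M. real_cond_exp M F f \<omega>
    = real_cond_exp M F (\<lambda>\<omega>. indicator A \<omega> * f \<omega>) \<omega> + real_cond_exp M F (\<lambda>\<omega>. indicator B \<omega> * f \<omega>) \<omega>"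
proof -
  have int: "integrable M (\<lambda>\<omega>. indicator A \<omega> * f \<omega>)" "integrable M (\<lambda>\<omega>. indicator B \<omega> * f \<omega>)"
    using integrable_mult_indicator[OF _ f] assms(1,2) by simp_all
  have "AE \<omega> in M. f \<omega> = indicator A \<omega> * f \<omega> + indicator B \<omega> * f \<omega>"
    using assms(4) by eventually_elim (use assms(3) in \<open>auto simp: indicator_def\<close>)
  then have "AE \<omega> in M. real_cond_exp M F f \<omega>
      = real_cond_exp M F (\<lambda>\<omega>. indicator A \<omega> * f \<omega> + indicator B \<omega> * f \<omega>) \<omega>"
    by (rule real_cond_exp_cong) (use f int in auto)
  with real_cond_exp_add[OF int] show ?thesis by eventually_elim simp
qed

lemma (in sigma_finite_subalgebra) integral_weighted_eq_cond_mean_ev: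
  assumes w: "w \<in> borel_measurable F" "integrable M (\<lambda>\<omega>. w \<omega> * f \<omega>)"
    and f: "integrable M f" and A: "A \<in> sets M"
    and weight: "AE \<omega> in M. w \<omega> * real_cond_exp M F f \<omega>
                   = real_cond_exp M F (\<lambda>\<omega>. indicator A \<omega> * f \<omega>) \<omega> / measure M A"
  shows "(\<integral>\<omega>. w \<omega> * f \<omega> \<partial>M) = cond_mean_ev M f A"
proof -
  have "(\<integral>\<omega>. w \<omega> * f \<omega> \<partial>M) = (\<integral>\<omega>. w \<omega> * real_cond_exp M F f \<omega> \<partial>M)"
    using real_cond_exp_intg(2)[OF w(2) w(1)] f by simp
  also have "\<dots> = (\<integral>\<omega>. real_cond_exp M F (\<lambda>\<omega>. indicator A \<omega> * f \<omega>) \<omega> / measure M A \<partial>M)"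
    by (rule integral_cong_AE) (use weight measurable_from_subalg[OF subalg w(1)] in auto)
  also have "\<dots> = cond_mean_ev M f A"
    unfolding cond_mean_ev_def
    using real_cond_exp_int(2)[OF integrable_mult_indicator[OF A f]] by simp
  finally show ?thesis .
qed

lemma ratio_weights_mult_sum:
  fixes \<epsilon> e1 e0 c1 c0 \<pi>1 \<pi>0 :: real
  assumes "e1 \<noteq> 0" "e0 \<noteq> 0" "c0 / e0 \<noteq> 0" "\<epsilon> = (c1 / e1) / (c0 / e0)" "\<epsilon> * e1 + e0 \<noteq> 0"
  shows "\<epsilon> * e1 / ((\<epsilon> * e1 + e0) * \<pi>1) * (c1 + c0) = c1 / \<pi>1"
    and "e0 / ((\<epsilon> * e1 + e0) * \<pi>0) * (c1 + c0) = c0 / \<pi>0"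
proof -
  define m where "m = c0 / e0"
  have c0: "c0 = m * e0" using assms(2) unfolding m_def by simp
  have c1: "c1 = \<epsilon> * m * e1" using assms(1,3,4) unfolding m_def[symmetric] by simp
  have sum: "c1 + c0 = m * (\<epsilon> * e1 + e0)" unfolding c0 c1 by (simp add: algebra_simps)
  show "\<epsilon> * e1 / ((\<epsilon> * e1 + e0) * \<pi>1) * (c1 + c0) = c1 / \<pi>1"
    using assms(5) unfolding sum by (simp add: c1)
  show "e0 / ((\<epsilon> * e1 + e0) * \<pi>0) * (c1 + c0) = c0 / \<pi>0"
    using assms(5) unfolding sum by (simp add: c0)
qed

locale principal_stratification = prob_space M
  for M :: "'a measure" and N :: "'b measure"
    and Z S1 S0 :: "'a \<Rightarrow> bool" and Y1 Y0 :: "'a \<Rightarrow> real" and X :: "'a \<Rightarrow> 'b" +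
  assumes measurable_Z [measurable]: "Z \<in> measurable M (count_space UNIV)"
    and measurable_S1 [measurable]: "S1 \<in> measurable M (count_space UNIV)"
    and measurable_S0 [measurable]: "S0 \<in> measurable M (count_space UNIV)"
    and measurable_Y1 [measurable]: "Y1 \<in> borel_measurable M"
    and measurable_Y0 [measurable]: "Y0 \<in> borel_measurable M"
    and measurable_X [measurable]: "X \<in> measurable M N"
    and randomization: "indep_set
      (sets (vimage_algebra (space M) Z (count_space UNIV)))
      (sets (vimage_algebra (space M) (\<lambda>\<omega>. (S1 \<omega>, S0 \<omega>, Y1 \<omega>, Y0 \<omega>, X \<omega>))
         (count_space UNIV \<Otimes>\<^sub>M count_space UNIV \<Otimes>\<^sub>M borel \<Otimes>\<^sub>M borel \<Otimes>\<^sub>M N)))"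
    and strong_monotonicity: "AE \<omega> in M. \<not> S0 \<omega>"
    and integrable_Y1: "integrable M Y1" and integrable_Y0: "integrable M Y0"
begin

definition treatment_algebra :: "'a measure" where
  "treatment_algebra = vimage_algebra (space M) Z (count_space UNIV)"

definition outcome_algebra :: "'a measure" where
  "outcome_algebra = vimage_algebra (space M) (\<lambda>\<omega>. (S1 \<omega>, S0 \<omega>, Y1 \<omega>, Y0 \<omega>, X \<omega>))
     (count_space UNIV \<Otimes>\<^sub>M count_space UNIV \<Otimes>\<^sub>M borel \<Otimes>\<^sub>M borel \<Otimes>\<^sub>M N)"

lemma space_outcome_algebra [simp]: "space outcome_algebra = space M"
  by (simp add: outcome_algebra_def)

lemma subalgebra_treatment_algebra: "subalgebra M treatment_algebra"
  unfolding treatment_algebra_def subalgebra_def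
  using sets_image_in_sets[OF refl measurable_Z] by simp

lemma subalgebra_outcome_algebra: "subalgebra M outcome_algebra"
  unfolding outcome_algebra_def subalgebra_def
  by (simp add: sets_image_in_sets[OF refl])

lemma indep_treatment_outcome: "indep_set (sets treatment_algebra) (sets outcome_algebra)"
  using randomization unfolding treatment_algebra_def outcome_algebra_def .

lemma treatment_arm_in_treatment_algebra: "{\<omega> \<in> space M. Z \<omega> = z} \<in> sets treatment_algebra"
proof -
  have "{\<omega> \<in> space M. Z \<omega> = z} = Z -` {z} \<inter> space M" by auto
  then show ?thesis
    unfolding treatment_algebra_def by (auto intro: in_vimage_algebra)
qed

lemma measurable_outcome_algebra [measurable]:
  "S1 \<in> measurable outcome_algebra (count_space UNIV)"
  "S0 \<in> measurable outcome_algebra (count_space UNIV)"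
  "Y1 \<in> borel_measurable outcome_algebra"
  "Y0 \<in> borel_measurable outcome_algebra"
  "X \<in> measurable outcome_algebra N"
proof -
  let ?V = "\<lambda>\<omega>. (S1 \<omega>, S0 \<omega>, Y1 \<omega>, Y0 \<omega>, X \<omega>)"
  have V: "?V \<in> measurable outcome_algebra
      (count_space UNIV \<Otimes>\<^sub>M count_space UNIV \<Otimes>\<^sub>M borel \<Otimes>\<^sub>M borel \<Otimes>\<^sub>M N)"
    unfolding outcome_algebra_def
  proof (rule measurable_vimage_algebra1)
    have "?V \<in> measurable M (count_space UNIV \<Otimes>\<^sub>M count_space UNIV \<Otimes>\<^sub>M borel \<Otimes>\<^sub>M borel \<Otimes>\<^sub>M N)"
      by measurable
    then show "?V \<in> space M \<rightarrow> space (count_space UNIV \<Otimes>\<^sub>M count_space UNIV \<Otimes>\<^sub>M borel \<Otimes>\<^sub>M borel \<Otimes>\<^sub>M N)"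
      by (simp add: measurable_def)
  qed
  show "S1 \<in> measurable outcome_algebra (count_space UNIV)"
    using measurable_compose[OF V measurable_fst] by (simp add: comp_def)
  show "S0 \<in> measurable outcome_algebra (count_space UNIV)"
    using measurable_compose[OF V, of "\<lambda>v. fst (snd v)"] by simp
  show "Y1 \<in> borel_measurable outcome_algebra"
    using measurable_compose[OF V, of "\<lambda>v. fst (snd (snd v))"] by simp
  show "Y0 \<in> borel_measurable outcome_algebra"
    using measurable_compose[OF V, of "\<lambda>v. fst (snd (snd (snd v)))"] by simp
  show "X \<in> measurable outcome_algebra N"
    using measurable_compose[OF V, of "\<lambda>v. snd (snd (snd (snd v)))"] by simp
qed

lemma subalgebra_covariates: "subalgebra outcome_algebra (sigX M X N)"
  unfolding subalgebra_def sigX_def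
  using sets_image_in_sets[OF _ measurable_outcome_algebra(5)] by simp

sublocale covariates: finite_measure_subalgebra M "sigX M X N"
  by unfold_locales
     (use subalgebra_covariates subalgebra_outcome_algebra in \<open>auto simp: subalgebra_def\<close>)

lemma cond_mean_ev_observed_treated:
  assumes pos: "prob {\<omega> \<in> space M. Z \<omega> \<and> obs Z S1 S0 \<omega> = s} > 0"
  shows "cond_mean_ev M (obs Z Y1 Y0) {\<omega> \<in> space M. Z \<omega> \<and> obs Z S1 S0 \<omega> = s}
    = cond_mean_ev M Y1 {\<omega> \<in> space M. stratum S1 S0 \<omega> = (s, False)}"
proof -
  let ?E = "{\<omega> \<in> space M. Z \<omega> = True}" and ?C = "{\<omega> \<in> space M. S1 \<omega> = s}"
  have arm: "{\<omega> \<in> space M. Z \<omega> \<and> obs Z S1 S0 \<omega> = s} = ?E \<inter> ?C"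
    by (auto simp: obs_def)
  have C: "?C \<in> sets outcome_algebra"
    using measurable_outcome_algebra(1) by (simp flip: space_outcome_algebra)
  have "prob ?E \<noteq> 0"
    using pos finite_measure_mono[of "?E \<inter> ?C" ?E] unfolding arm by auto
  have "cond_mean_ev M (obs Z Y1 Y0) (?E \<inter> ?C) = cond_mean_ev M Y1 (?E \<inter> ?C)"
    by (rule cond_mean_ev_cong) (simp add: obs_def)
  also have "\<dots> = cond_mean_ev M Y1 ?C"
    by (rule cond_mean_ev_Int_indep_set[OF indep_treatment_outcome subalgebra_treatment_algebra
          subalgebra_outcome_algebra treatment_arm_in_treatment_algebra \<open>prob ?E \<noteq> 0\<close> C
          measurable_outcome_algebra(3) integrable_Y1])
  also have "\<dots> = cond_mean_ev M Y1 {\<omega> \<in> space M. stratum S1 S0 \<omega> = (s, False)}"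
    by (rule cond_mean_ev_AE_cong) (use strong_monotonicity in \<open>auto simp: stratum_def\<close>)
  finally show ?thesis unfolding arm .
qed

lemma cond_mean_ev_weighted_control:
  assumes w: "w \<in> borel_measurable (sigX M X N)" "integrable M (\<lambda>\<omega>. w \<omega> * obs Z Y1 Y0 \<omega>)"
    and pos: "prob {\<omega> \<in> space M. \<not> Z \<omega>} > 0" and A: "A \<in> sets M"
    and weight: "AE \<omega> in M. w \<omega> * real_cond_exp M (sigX M X N) Y0 \<omega>
      = real_cond_exp M (sigX M X N) (\<lambda>\<omega>. indicator A \<omega> * Y0 \<omega>) \<omega> / prob A"
  shows "cond_mean_ev M (\<lambda>\<omega>. w \<omega> * obs Z Y1 Y0 \<omega>) {\<omega> \<in> space M. \<not> Z \<omega>} = cond_mean_ev M Y0 A"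
proof -
  let ?E = "{\<omega> \<in> space M. Z \<omega> = False}"
  have E: "?E \<in> sets treatment_algebra" "prob ?E \<noteq> 0"
    using treatment_arm_in_treatment_algebra[of False] pos by simp_all
  have w_outcome [measurable]: "w \<in> borel_measurable outcome_algebra"
    by (rule measurable_from_subalg[OF subalgebra_covariates w(1)])
  have "integrable M (\<lambda>\<omega>. indicator ?E \<omega> * (w \<omega> * obs Z Y1 Y0 \<omega>))"
    using integrable_mult_indicator[OF _ w(2), of ?E] by simp
  also have "(\<lambda>\<omega>. indicator ?E \<omega> * (w \<omega> * obs Z Y1 Y0 \<omega>)) = (\<lambda>\<omega>. indicator ?E \<omega> * (w \<omega> * Y0 \<omega>))"
    by (auto simp: obs_def indicator_def)
  finally have wY0: "integrable M (\<lambda>\<omega>. w \<omega> * Y0 \<omega>)"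
    by (rule integrable_if_indicator_mult_indep_set[OF indep_treatment_outcome subalgebra_treatment_algebra
          subalgebra_outcome_algebra E, rotated]) measurable
  have arm: "{\<omega> \<in> space M. \<not> Z \<omega>} = ?E \<inter> space outcome_algebra" by auto
  have "cond_mean_ev M (\<lambda>\<omega>. w \<omega> * obs Z Y1 Y0 \<omega>) {\<omega> \<in> space M. \<not> Z \<omega>}
      = cond_mean_ev M (\<lambda>\<omega>. w \<omega> * Y0 \<omega>) (?E \<inter> space outcome_algebra)"
    unfolding arm by (rule cond_mean_ev_cong) (simp add: obs_def)
  also have "\<dots> = cond_mean_ev M (\<lambda>\<omega>. w \<omega> * Y0 \<omega>) (space outcome_algebra)"
    by (rule cond_mean_ev_Int_indep_set[OF indep_treatment_outcome subalgebra_treatment_algebra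
          subalgebra_outcome_algebra E sets.top _ wY0]) measurable
  also have "\<dots> = (\<integral>\<omega>. w \<omega> * Y0 \<omega> \<partial>M)"
    by (simp add: cond_mean_ev_space)
  also have "\<dots> = cond_mean_ev M Y0 A"
    by (rule covariates.integral_weighted_eq_cond_mean_ev[OF w(1) wY0 integrable_Y0 A weight])
  finally show ?thesis .
qed

lemma ACE_eq_observed_treated_minus_weighted_control:
  fixes s :: bool and w :: "'a \<Rightarrow> real"
  defines "A \<equiv> {\<omega> \<in> space M. stratum S1 S0 \<omega> = (s, False)}"
  assumes w: "w \<in> borel_measurable (sigX M X N)" "integrable M (\<lambda>\<omega>. w \<omega> * obs Z Y1 Y0 \<omega>)"
    and pos: "prob {\<omega> \<in> space M. Z \<omega> \<and> obs Z S1 S0 \<omega> = s} > 0" "prob {\<omega> \<in> space M. \<not> Z \<omega>} > 0"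
    and weight: "AE \<omega> in M. w \<omega> * real_cond_exp M (sigX M X N) Y0 \<omega>
      = real_cond_exp M (sigX M X N) (\<lambda>\<omega>. indicator A \<omega> * Y0 \<omega>) \<omega> / prob A"
  shows "ACE M (stratum S1 S0) (s, False) Y1 Y0
    = cond_mean_ev M (obs Z Y1 Y0) {\<omega> \<in> space M. Z \<omega> \<and> obs Z S1 S0 \<omega> = s}
      - cond_mean_ev M (\<lambda>\<omega>. w \<omega> * obs Z Y1 Y0 \<omega>) {\<omega> \<in> space M. \<not> Z \<omega>}"
proof -
  have A_sets: "A \<in> sets M" unfolding A_def stratum_def by measurable
  show ?thesis
    unfolding ACE_def A_def[symmetric] cond_mean_ev_diff[OF A_sets integrable_Y1 integrable_Y0]
      cond_mean_ev_observed_treated[OF pos(1)] cond_mean_ev_weighted_control[OF w pos(2) A_sets weight]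
    by (simp add: A_def)
qed

lemma AE_ratio_weights:
  fixes \<epsilon> \<pi>1 \<pi>0 :: real
  defines "e1 \<equiv> pscore M X N (stratum S1 S0) (True, False)"
    and "e0 \<equiv> pscore M X N (stratum S1 S0) (False, False)"
    and "A1 \<equiv> {\<omega> \<in> space M. stratum S1 S0 \<omega> = (True, False)}"
    and "A0 \<equiv> {\<omega> \<in> space M. stratum S1 S0 \<omega> = (False, False)}"
  assumes eps: "AE \<omega> in M. \<epsilon> = pcond_mean M X N (stratum S1 S0) (True, False) Y0 \<omega>
                               / pcond_mean M X N (stratum S1 S0) (False, False) Y0 \<omega>"
    and pos: "AE \<omega> in M. e1 \<omega> > 0" "AE \<omega> in M. e0 \<omega> > 0"
      "AE \<omega> in M. pcond_mean M X N (stratum S1 S0) (False, False) Y0 \<omega> \<noteq> 0"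
      "AE \<omega> in M. \<epsilon> * e1 \<omega> + e0 \<omega> > 0"
  shows "AE \<omega> in M. \<epsilon> * e1 \<omega> / ((\<epsilon> * e1 \<omega> + e0 \<omega>) * \<pi>1) * real_cond_exp M (sigX M X N) Y0 \<omega>
      = real_cond_exp M (sigX M X N) (\<lambda>\<omega>. indicator A1 \<omega> * Y0 \<omega>) \<omega> / \<pi>1"
    and "AE \<omega> in M. e0 \<omega> / ((\<epsilon> * e1 \<omega> + e0 \<omega>) * \<pi>0) * real_cond_exp M (sigX M X N) Y0 \<omega>
      = real_cond_exp M (sigX M X N) (\<lambda>\<omega>. indicator A0 \<omega> * Y0 \<omega>) \<omega> / \<pi>0"
proof -
  have A: "A1 \<in> sets M" "A0 \<in> sets M" unfolding A1_def A0_def stratum_def by measurable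
  have disjoint: "A1 \<inter> A0 = {}" by (auto simp: A1_def A0_def)
  have cover: "AE \<omega> in M. \<omega> \<in> A1 \<union> A0"
    using AE_space strong_monotonicity by eventually_elim (auto simp: A1_def A0_def stratum_def)
  have split: "AE \<omega> in M. real_cond_exp M (sigX M X N) Y0 \<omega>
      = real_cond_exp M (sigX M X N) (\<lambda>\<omega>. indicator A1 \<omega> * Y0 \<omega>) \<omega>
        + real_cond_exp M (sigX M X N) (\<lambda>\<omega>. indicator A0 \<omega> * Y0 \<omega>) \<omega>"
    by (rule covariates.real_cond_exp_AE_partition[OF A disjoint cover integrable_Y0])
  from split eps pos show "AE \<omega> in M. \<epsilon> * e1 \<omega> / ((\<epsilon> * e1 \<omega> + e0 \<omega>) * \<pi>1) * real_cond_exp M (sigX M X N) Y0 \<omega>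
      = real_cond_exp M (sigX M X N) (\<lambda>\<omega>. indicator A1 \<omega> * Y0 \<omega>) \<omega> / \<pi>1"
    unfolding pcond_mean_def e1_def e0_def A1_def A0_def pscore_def
    by eventually_elim (simp only: ratio_weights_mult_sum less_imp_neq[symmetric] simp_thms)
  from split eps pos show "AE \<omega> in M. e0 \<omega> / ((\<epsilon> * e1 \<omega> + e0 \<omega>) * \<pi>0) * real_cond_exp M (sigX M X N) Y0 \<omega>
      = real_cond_exp M (sigX M X N) (\<lambda>\<omega>. indicator A0 \<omega> * Y0 \<omega>) \<omega> / \<pi>0"
    unfolding pcond_mean_def e1_def e0_def A1_def A0_def pscore_def
    by eventually_elim (simp only: ratio_weights_mult_sum less_imp_neq[symmetric] simp_thms)
qed

end

theorem proposition3:
  fixes M :: "'a measure" and N :: "'b measure"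
    and Z S1 S0 :: "'a \<Rightarrow> bool" and Y1 Y0 :: "'a \<Rightarrow> real" and X :: "'a \<Rightarrow> 'b"
    and \<epsilon> :: real
  defines "U \<equiv> stratum S1 S0"
    and "S \<equiv> obs Z S1 S0"
    and "Y \<equiv> obs Z Y1 Y0"
    and "e10 \<equiv> pscore M X N (stratum S1 S0) (True, False)"
    and "e00 \<equiv> pscore M X N (stratum S1 S0) (False, False)"
    and "\<pi>10 \<equiv> pprop M (stratum S1 S0) (True, False)"
    and "\<pi>00 \<equiv> pprop M (stratum S1 S0) (False, False)"
  defines "w10 \<equiv> (\<lambda>\<omega>. \<epsilon> * e10 \<omega> / ((\<epsilon> * e10 \<omega> + e00 \<omega>) * \<pi>10))"
    and "w00 \<equiv> (\<lambda>\<omega>. e00 \<omega> / ((\<epsilon> * e10 \<omega> + e00 \<omega>) * \<pi>00))"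
  assumes M: "prob_space M"
    and rv_Z: "Z \<in> measurable M (count_space UNIV)"
    and rv_S1: "S1 \<in> measurable M (count_space UNIV)"
    and rv_S0: "S0 \<in> measurable M (count_space UNIV)"
    and rv_Y1: "Y1 \<in> borel_measurable M"
    and rv_Y0: "Y0 \<in> borel_measurable M"
    and rv_X: "X \<in> measurable M N"
    \<comment> \<open>Randomization\<close>
    and rand: "prob_space.indep_set M
                 (sets (vimage_algebra (space M) Z (count_space UNIV)))
                 (sets (vimage_algebra (space M) (\<lambda>\<omega>. (S1 \<omega>, S0 \<omega>, Y1 \<omega>, Y0 \<omega>, X \<omega>))
                    (count_space UNIV \<Otimes>\<^sub>M count_space UNIV \<Otimes>\<^sub>M borel \<Otimes>\<^sub>M borel \<Otimes>\<^sub>M N)))"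
    \<comment> \<open>Strong monotonicity\<close>
    and mono: "AE \<omega> in M. \<not> S0 \<omega>"
    \<comment> \<open>the ratio assumption defining the constant epsilon\<close>
    and eps: "AE \<omega> in M. \<epsilon> = pcond_mean M X N U (True, False) Y0 \<omega>
                                 / pcond_mean M X N U (False, False) Y0 \<omega>"
    \<comment> \<open>existence of expectations\<close>
    and int_Y1: "integrable M Y1" and int_Y0: "integrable M Y0"
    and int_w10: "integrable M (\<lambda>\<omega>. w10 \<omega> * Y \<omega>)"
    and int_w00: "integrable M (\<lambda>\<omega>. w00 \<omega> * Y \<omega>)"
    \<comment> \<open>positivity of conditioning events and denominators\<close>
    and pos_Z1S1: "measure M {\<omega> \<in> space M. Z \<omega> \<and> S \<omega>} > 0"
    and pos_Z1S0: "measure M {\<omega> \<in> space M. Z \<omega> \<and> \<not> S \<omega>} > 0"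
    and pos_Z0: "measure M {\<omega> \<in> space M. \<not> Z \<omega>} > 0"
    and pos_pi10: "\<pi>10 > 0" and pos_pi00: "\<pi>00 > 0"
    and pos_e10: "AE \<omega> in M. e10 \<omega> > 0"
    and pos_e00: "AE \<omega> in M. e00 \<omega> > 0"
    and pos_mu00: "AE \<omega> in M. pcond_mean M X N U (False, False) Y0 \<omega> \<noteq> 0"
    and pos_den: "AE \<omega> in M. \<epsilon> * e10 \<omega> + e00 \<omega> > 0"
  shows "(ACE M U (True, False) Y1 Y0
           = cond_mean_ev M Y {\<omega> \<in> space M. Z \<omega> \<and> S \<omega>}
             - cond_mean_ev M (\<lambda>\<omega>. w10 \<omega> * Y \<omega>) {\<omega> \<in> space M. \<not> Z \<omega>})
       \<and> (ACE M U (False, False) Y1 Y0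
           = cond_mean_ev M Y {\<omega> \<in> space M. Z \<omega> \<and> \<not> S \<omega>}
             - cond_mean_ev M (\<lambda>\<omega>. w00 \<omega> * Y \<omega>) {\<omega> \<in> space M. \<not> Z \<omega>})"
proof -
  interpret principal_stratification M N Z S1 S0 Y1 Y0 X
    using M rv_Z rv_S1 rv_S0 rv_Y1 rv_Y0 rv_X rand mono int_Y1 int_Y0
    by (simp add: principal_stratification_def principal_stratification_axioms_def)
  have "pscore M X N (stratum S1 S0) u \<in> borel_measurable (sigX M X N)" for u
    by (simp add: pscore_def)
  then have w_measurable: "w10 \<in> borel_measurable (sigX M X N)" "w00 \<in> borel_measurable (sigX M X N)"
    unfolding w10_def w00_def e10_def e00_def by measurable
  note weights = AE_ratio_weights[OF eps[unfolded U_def] pos_e10[unfolded e10_def] pos_e00[unfolded e00_def]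
      pos_mu00[unfolded U_def] pos_den[unfolded e10_def e00_def]]
  show ?thesis
    using ACE_eq_observed_treated_minus_weighted_control[where s = True and w = w10]
      ACE_eq_observed_treated_minus_weighted_control[where s = False and w = w00]
      w_measurable int_w10 int_w00 pos_Z1S1 pos_Z1S0 pos_Z0
      weights(1)[of \<pi>10] weights(2)[of \<pi>00]
    by (simp add: U_def S_def Y_def w10_def w00_def e10_def e00_def \<pi>10_def \<pi>00_def pprop_def)
qed

end
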